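(* Let $T\ge2$ be an integer and $\gamma\in\mathbb{R}$. Let $\{\hat c^n_t: n\ge1,\ 1\le t\le T-1\}$ be independent, identically distributed real random variables with mean $c$ and variance $\sigma^2<\infty$. Let $\alpha_{n-1,t}$ ($n\ge1$, $1\le t\le T-1$) be deterministic real numbers. Set $\bar v^0_t=0$ for $1\le t\le T-1$ and $\bar v^n_T=0$ for all $n\ge0$, and for $n\ge1$, $1\le t\le T-1$, $$\hat v^n_t=\hat c^n_t+\gamma\bar v^{n-1}_{t+1},\qquad \bar v^n_t=(1-\alpha_{n-1,t})\bar v^{n-1}_t+\alpha_{n-1,t}\hat v^n_t.$$ For $1\le t,t'\le T-1$ define $\delta^1_t=\alpha_{0,t}$, $\lambda^1_{t,t'}=\alpha_{0,t}^2\mathbf 1_{\{t=t'\}}$, and for $n>1$, $$\delta^n_t=(1+\gamma\delta^{n-1}_{t+1})\alpha_{n-1,t}+(1-\alpha_{n-1,t})\delta^{n-1}_t,$$ $$\lambda^n_{t,t'}=\alpha_{n-1,t}^2\mathbf 1_{\{t=t'\}}+J^{n-1}_{t,t'}+K^{n-1}_{t,t'}+L^{n-1}_{t,t'}+M^{n-1}_{t,t'},$$ where $J^{n-1}_{t,t'}=(1-\alpha_{n-1,t})(1-\alpha_{n-1,t'})\lambda^{n-1}_{t,t'}$, $K^{n-1}_{t,t'}=\gamma(1-\alpha_{n-1,t})\alpha_{n-1,t'}\lambda^{n-1}_{t,t'+1}$, $L^{n-1}_{t,t'}=\gamma\alpha_{n-1,t}(1-\alpha_{n-1,t'})\lambda^{n-1}_{t+1,t'}$,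 $M^{n-1}_{t,t'}=\gamma^2\alpha_{n-1,t}\alpha_{n-1,t'}\lambda^{n-1}_{t+1,t'+1}$, with the conventions $\delta^m_T=0$ and $\lambda^m_{t,T}=\lambda^m_{T,t'}=0$ for all $m$. Then for all $n\ge1$ and $1\le t,t'\le T-1$, $\mathbb{E}(\bar v^n_t)=\delta^n_tc$ and $\mathrm{Cov}(\bar v^n_t,\bar v^n_{t'})=\lambda^n_{t,t'}\sigma^2$.
   Context: This is a finite-horizon (horizon $T$) version of approximate value iteration for a single-state, single-action problem, where at each iteration $n$ the updates are performed for all $t=1,\dots,T-1$, and the terminal value is $0$. *)

theory Defs
  imports "HOL-Probability.Probability"
begin

text \<open>Approximate value iteration, finite horizon T, single state/action.
  vbar alpha gamma T chat n t \<omega> is the iterate bar v^n_t; alpha n t stands for alpha_{n,t},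
  so the update producing bar v^{n+1} uses alpha n t = alpha_{(n+1)-1,t} and chat (n+1) t.\<close>
fun vbar :: "(nat \<Rightarrow> nat \<Rightarrow> real) \<Rightarrow> real \<Rightarrow> nat \<Rightarrow> (nat \<Rightarrow> nat \<Rightarrow> 'a \<Rightarrow> real)
              \<Rightarrow> nat \<Rightarrow> nat \<Rightarrow> 'a \<Rightarrow> real" where
  "vbar alpha gamma T chat 0 t \<omega> = 0"
| "vbar alpha gamma T chat (Suc n) t \<omega> =
     (if 1 \<le> t \<and> t \<le> T - 1 then
        (1 - alpha n t) * vbar alpha gamma T chat n t \<omega>
        + alpha n t * (chat (Suc n) t \<omega> + gamma * vbar alpha gamma T chat n (t + 1) \<omega>)
      else 0)"

fun delta :: "(nat \<Rightarrow> nat \<Rightarrow> real) \<Rightarrow> real \<Rightarrow> nat \<Rightarrow> nat \<Rightarrow> nat \<Rightarrow> real" where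
  "delta alpha gamma T 0 t = 0"
| "delta alpha gamma T (Suc 0) t = (if 1 \<le> t \<and> t \<le> T - 1 then alpha 0 t else 0)"
| "delta alpha gamma T (Suc (Suc n)) t =
     (if 1 \<le> t \<and> t \<le> T - 1 then
        (1 + gamma * delta alpha gamma T (Suc n) (t + 1)) * alpha (Suc n) t
        + (1 - alpha (Suc n) t) * delta alpha gamma T (Suc n) t
      else 0)"

fun lam :: "(nat \<Rightarrow> nat \<Rightarrow> real) \<Rightarrow> real \<Rightarrow> nat \<Rightarrow> nat \<Rightarrow> nat \<Rightarrow> nat \<Rightarrow> real" where
  "lam alpha gamma T 0 t t' = 0"
| "lam alpha gamma T (Suc 0) t t' =
     (if 1 \<le> t \<and> t \<le> T - 1 \<and> 1 \<le> t' \<and> t' \<le> T - 1 then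
        (alpha 0 t)\<^sup>2 * (if t = t' then 1 else 0)
      else 0)"
| "lam alpha gamma T (Suc (Suc n)) t t' =
     (if 1 \<le> t \<and> t \<le> T - 1 \<and> 1 \<le> t' \<and> t' \<le> T - 1 then
        (alpha (Suc n) t)\<^sup>2 * (if t = t' then 1 else 0)
        + (1 - alpha (Suc n) t) * (1 - alpha (Suc n) t') * lam alpha gamma T (Suc n) t t'
        + gamma * (1 - alpha (Suc n) t) * alpha (Suc n) t' * lam alpha gamma T (Suc n) t (t' + 1)
        + gamma * alpha (Suc n) t * (1 - alpha (Suc n) t') * lam alpha gamma T (Suc n) (t + 1) t'
        + gamma\<^sup>2 * alpha (Suc n) t * alpha (Suc n) t' * lam alpha gamma T (Suc n) (t + 1) (t' + 1)
      else 0)"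

definition covariance :: "'a measure \<Rightarrow> ('a \<Rightarrow> real) \<Rightarrow> ('a \<Rightarrow> real) \<Rightarrow> real" where
  "covariance M X Y =
     (LINT x|M. (X x - (LINT y|M. X y)) * (Y x - (LINT y|M. Y y)))"

end

theory Submission imports Defs begin

text \<open>Each iterate \<open>vbar n t\<close> is an affine combination of the samples of rounds \<open>1, \<dots>, n\<close>
  (with deterministic coefficients), so its mean follows from linearity of expectation, and the
  recursion for \<open>lam\<close> is the bilinear expansion of the covariance of two such updates. In that
  expansion every cross term between \<open>vbar n\<close> and the fresh sample \<open>chat (n + 1) t\<close> vanishes by
  independence, and fresh samples are uncorrelated except on the diagonal, where they contribute
  \<open>(alpha n t)\<^sup>2 * sigma\<^sup>2\<close>.\<close>

context prob_space
begin

definition square_integrable :: "('a \<Rightarrow> real) \<Rightarrow> bool" where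
  "square_integrable X \<longleftrightarrow> X \<in> borel_measurable M \<and> integrable M (\<lambda>x. (X x)\<^sup>2)"

lemma square_integrable_integrable: "square_integrable X \<Longrightarrow> integrable M X"
  unfolding square_integrable_def by (auto intro: square_integrable_imp_integrable)

lemma square_integrable_mult_integrable:
  assumes "square_integrable X" "square_integrable Y"
  shows "integrable M (\<lambda>x. X x * Y x)"
proof (rule Bochner_Integration.integrable_bound)
  show "integrable M (\<lambda>x. (X x)\<^sup>2 + (Y x)\<^sup>2)"
    using assms unfolding square_integrable_def by auto
  show "(\<lambda>x. X x * Y x) \<in> borel_measurable M"
    using assms unfolding square_integrable_def by auto
  have "\<bar>u * v\<bar> \<le> u\<^sup>2 + v\<^sup>2" for u v :: real
  proof -
    have "2 * (\<bar>u\<bar> * \<bar>v\<bar>) \<le> u\<^sup>2 + v\<^sup>2"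
      using sum_squares_bound[of "\<bar>u\<bar>" "\<bar>v\<bar>"] by (simp add: mult.assoc)
    moreover have "0 \<le> \<bar>u\<bar> * \<bar>v\<bar>"
      by simp
    ultimately show ?thesis
      unfolding abs_mult by linarith
  qed
  then show "AE x in M. norm (X x * Y x) \<le> norm ((X x)\<^sup>2 + (Y x)\<^sup>2)"
    by simp
qed

lemma square_integrable_add:
  assumes "square_integrable X" "square_integrable Y"
  shows "square_integrable (\<lambda>x. X x + Y x)"
proof -
  have "integrable M (\<lambda>x. (X x)\<^sup>2 + 2 * (X x * Y x) + (Y x)\<^sup>2)"
    using assms square_integrable_mult_integrable[OF assms] unfolding square_integrable_def by auto
  moreover have "(\<lambda>x. (X x + Y x)\<^sup>2) = (\<lambda>x. (X x)\<^sup>2 + 2 * (X x * Y x) + (Y x)\<^sup>2)"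
    by (simp add: power2_sum fun_eq_iff)
  ultimately show ?thesis
    using assms unfolding square_integrable_def by auto
qed

lemma square_integrable_scale: "square_integrable X \<Longrightarrow> square_integrable (\<lambda>x. a * X x)"
  unfolding square_integrable_def by (auto simp: power_mult_distrib)

lemma square_integrable_zero: "square_integrable (\<lambda>x. 0)"
  unfolding square_integrable_def by simp

definition cov :: "('a \<Rightarrow> real) \<Rightarrow> ('a \<Rightarrow> real) \<Rightarrow> real" where
  "cov X Y = expectation (\<lambda>x. X x * Y x) - expectation X * expectation Y"

lemma covariance_eq_cov:
  assumes "square_integrable X" "square_integrable Y"
  shows "covariance M X Y = cov X Y"
proof -
  let ?a = "expectation X" and ?b = "expectation Y"
  have "covariance M X Y = expectation (\<lambda>x. (X x * Y x - ?b * X x) - (?a * Y x - ?a * ?b))"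
    unfolding covariance_def by (rule Bochner_Integration.integral_cong) (auto simp: algebra_simps)
  also have "\<dots> = expectation (\<lambda>x. X x * Y x) - ?b * ?a - (?a * ?b - ?a * ?b)"
    using assms square_integrable_integrable square_integrable_mult_integrable prob_space
    by (simp add: Bochner_Integration.integral_diff)
  finally show ?thesis
    unfolding cov_def by simp
qed

lemma cov_commute: "cov X Y = cov Y X"
  unfolding cov_def by (simp add: mult.commute)

lemma cov_add_left:
  assumes "square_integrable X" "square_integrable Y" "square_integrable Z"
  shows "cov (\<lambda>x. X x + Y x) Z = cov X Z + cov Y Z"
  using assms square_integrable_integrable square_integrable_mult_integrable
  unfolding cov_def by (simp add: distrib_right algebra_simps)

lemma cov_add_right:
  "square_integrable X \<Longrightarrow> square_integrable Y \<Longrightarrow> square_integrable Z \<Longrightarrow>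
    cov Z (\<lambda>x. X x + Y x) = cov Z X + cov Z Y"
  using cov_add_left cov_commute by metis

lemma cov_scale_left: "cov (\<lambda>x. a * X x) Z = a * cov X Z"
  unfolding cov_def by (simp add: algebra_simps)

lemma cov_scale_right: "cov Z (\<lambda>x. a * X x) = a * cov Z X"
  using cov_scale_left cov_commute by metis

lemma cov_zero_left: "cov (\<lambda>x. 0) Y = 0"
  unfolding cov_def by simp

lemma cov_zero_right: "cov Y (\<lambda>x. 0) = 0"
  unfolding cov_def by simp

lemma cov_self: "square_integrable X \<Longrightarrow> cov X X = variance X"
  using covariance_eq_cov[of X X] unfolding covariance_def by (simp add: power2_eq_square)

lemma cov_indep_vars:
  fixes X :: "'i \<Rightarrow> 'a \<Rightarrow> real"
  assumes "indep_vars (\<lambda>_. borel) X I" "i \<in> I" "j \<in> I" "i \<noteq> j"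
    and "square_integrable (X i)" "square_integrable (X j)"
  shows "cov (X i) (X j) = 0"
proof -
  have "indep_vars (\<lambda>_. borel) X {i, j}"
    using assms by (auto intro: indep_vars_subset)
  then have "expectation (\<lambda>x. \<Prod>k\<in>{i, j}. X k x) = (\<Prod>k\<in>{i, j}. expectation (X k))"
    using assms by (intro indep_vars_lebesgue_integral) (auto simp: square_integrable_integrable)
  then show ?thesis
    using \<open>i \<noteq> j\<close> unfolding cov_def by simp
qed

end

lemma vbar_Suc_in_range:
  "1 \<le> t \<Longrightarrow> t \<le> T - 1 \<Longrightarrow> vbar alpha gamma T chat (Suc n) t =
    (\<lambda>x. (1 - alpha n t) * vbar alpha gamma T chat n t x
       + (alpha n t * chat (Suc n) t x + (alpha n t * gamma) * vbar alpha gamma T chat n (t + 1) x))"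
  by (auto simp: fun_eq_iff algebra_simps)

lemma vbar_Suc_out_of_range:
  "\<not> (1 \<le> t \<and> t \<le> T - 1) \<Longrightarrow> vbar alpha gamma T chat (Suc n) t = (\<lambda>x. 0)"
  by (auto simp: fun_eq_iff)

lemma vbar_0: "vbar alpha gamma T chat 0 t = (\<lambda>x. 0)"
  by (auto simp: fun_eq_iff)

text \<open>The equations of \<open>delta\<close> and \<open>lam\<close> at \<open>n = 1\<close> are the general recursion started from 0.\<close>

lemma delta_Suc:
  "delta alpha gamma T (Suc n) t = (if 1 \<le> t \<and> t \<le> T - 1 then
     (1 + gamma * delta alpha gamma T n (t + 1)) * alpha n t + (1 - alpha n t) * delta alpha gamma T n t
   else 0)"
  by (cases n) auto

lemma lam_Suc:
  "lam alpha gamma T (Suc n) t t' =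
     (if 1 \<le> t \<and> t \<le> T - 1 \<and> 1 \<le> t' \<and> t' \<le> T - 1 then
        (alpha n t)\<^sup>2 * (if t = t' then 1 else 0)
        + (1 - alpha n t) * (1 - alpha n t') * lam alpha gamma T n t t'
        + gamma * (1 - alpha n t) * alpha n t' * lam alpha gamma T n t (t' + 1)
        + gamma * alpha n t * (1 - alpha n t') * lam alpha gamma T n (t + 1) t'
        + gamma\<^sup>2 * alpha n t * alpha n t' * lam alpha gamma T n (t + 1) (t' + 1)
      else 0)"
  by (cases n) auto

locale value_iteration_samples = prob_space M
  for M :: "'a measure" and chat :: "nat \<Rightarrow> nat \<Rightarrow> 'a \<Rightarrow> real" and T :: nat and c sigma :: real +
  assumes chat_square_integrable:
      "\<And>m s. m \<ge> 1 \<Longrightarrow> 1 \<le> s \<Longrightarrow> s \<le> T - 1 \<Longrightarrow> square_integrable (chat m s)"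
    and chat_indep: "indep_vars (\<lambda>_. borel) (\<lambda>(m, s). chat m s) ({1..} \<times> {1..T - 1})"
    and chat_mean: "\<And>m s. m \<ge> 1 \<Longrightarrow> 1 \<le> s \<Longrightarrow> s \<le> T - 1 \<Longrightarrow> expectation (chat m s) = c"
    and chat_variance: "\<And>m s. m \<ge> 1 \<Longrightarrow> 1 \<le> s \<Longrightarrow> s \<le> T - 1 \<Longrightarrow> variance (chat m s) = sigma\<^sup>2"
begin

lemma square_integrable_vbar: "square_integrable (vbar alpha gamma T chat n t)"
proof (induction n arbitrary: t)
  case 0
  then show ?case by (simp add: vbar_0 square_integrable_zero)
next
  case (Suc n)
  then show ?case
    by (cases "1 \<le> t \<and> t \<le> T - 1")
      (auto simp: vbar_Suc_in_range vbar_Suc_out_of_range square_integrable_zero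
        intro!: square_integrable_add square_integrable_scale chat_square_integrable)
qed

lemma expectation_vbar:
  "expectation (vbar alpha gamma T chat n t) = delta alpha gamma T n t * c"
proof (induction n arbitrary: t)
  case 0
  then show ?case by (simp add: vbar_0)
next
  case (Suc n)
  show ?case
  proof (cases "1 \<le> t \<and> t \<le> T - 1")
    case True
    have "integrable M (vbar alpha gamma T chat n t)" "integrable M (vbar alpha gamma T chat n (t + 1))"
      "integrable M (chat (Suc n) t)"
      using True square_integrable_vbar chat_square_integrable square_integrable_integrable by auto
    then show ?thesis
      using True Suc chat_mean[of "Suc n" t]
      by (simp add: vbar_Suc_in_range delta_Suc algebra_simps)
  qed (auto simp: vbar_Suc_out_of_range delta_Suc)
qed

lemma cov_chat:
  assumes "m \<ge> 1" "1 \<le> r" "r \<le> T - 1" "m' \<ge> 1" "1 \<le> r'" "r' \<le> T - 1"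
  shows "cov (chat m r) (chat m' r') = (if (m, r) = (m', r') then sigma\<^sup>2 else 0)"
proof (cases "(m, r) = (m', r')")
  case True
  then show ?thesis
    using assms cov_self chat_square_integrable chat_variance by simp
next
  case False
  have "cov ((\<lambda>(m, s). chat m s) (m, r)) ((\<lambda>(m, s). chat m s) (m', r')) = 0"
    using assms False chat_square_integrable by (intro cov_indep_vars[OF chat_indep]) auto
  then show ?thesis
    using False by auto
qed

lemma cov_vbar_future_chat:
  assumes "n < m" "1 \<le> r" "r \<le> T - 1"
  shows "cov (vbar alpha gamma T chat n t) (chat m r) = 0"
  using assms(1)
proof (induction n arbitrary: t)
  case 0
  then show ?case by (simp add: vbar_0 cov_zero_left)
next
  case (Suc n)
  show ?case
  proof (cases "1 \<le> t \<and> t \<le> T - 1")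
    case True
    then have "cov (chat (Suc n) t) (chat m r) = 0"
      using cov_chat[of "Suc n" t m r] assms Suc.prems by simp
    then show ?thesis
      using Suc True assms
      by (simp add: vbar_Suc_in_range cov_add_left cov_scale_left square_integrable_add
          square_integrable_scale square_integrable_vbar chat_square_integrable)
  qed (simp add: vbar_Suc_out_of_range cov_zero_left)
qed

lemma cov_vbar:
  "cov (vbar alpha gamma T chat n t) (vbar alpha gamma T chat n t') = lam alpha gamma T n t t' * sigma\<^sup>2"
proof (induction n arbitrary: t t')
  case 0
  then show ?case by (simp add: vbar_0 cov_zero_left)
next
  case (Suc n)
  show ?case
  proof (cases "1 \<le> t \<and> t \<le> T - 1 \<and> 1 \<le> t' \<and> t' \<le> T - 1")
    case True
    have fresh: "cov (vbar alpha gamma T chat n u) (chat (Suc n) r) = 0"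
      "cov (chat (Suc n) r) (vbar alpha gamma T chat n u) = 0"
      if "1 \<le> r" "r \<le> T - 1" for u r
      using cov_vbar_future_chat[of n "Suc n" r] that cov_commute by auto
    have samples: "cov (chat (Suc n) t) (chat (Suc n) t') = (if t = t' then sigma\<^sup>2 else 0)"
      using cov_chat[of "Suc n" t "Suc n" t'] True by simp
    have "square_integrable (chat (Suc n) t)" "square_integrable (chat (Suc n) t')"
      using True chat_square_integrable by auto
    with True fresh samples Suc show ?thesis
      by (simp add: vbar_Suc_in_range lam_Suc cov_add_left cov_add_right cov_scale_left
          cov_scale_right square_integrable_add square_integrable_scale square_integrable_vbar)
        (simp add: algebra_simps power2_eq_square)
  qed (auto simp: vbar_Suc_out_of_range lam_Suc cov_zero_left cov_zero_right)
qed

end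

theorem proposition6:
  fixes M :: "'a measure"
    and chat :: "nat \<Rightarrow> nat \<Rightarrow> 'a \<Rightarrow> real"
    and alpha :: "nat \<Rightarrow> nat \<Rightarrow> real"
    and gamma c sigma :: real
    and T n t t' :: nat
  assumes "prob_space M"
    and "T \<ge> 2"
    and rv: "\<And>m s. m \<ge> 1 \<Longrightarrow> 1 \<le> s \<Longrightarrow> s \<le> T - 1 \<Longrightarrow> chat m s \<in> borel_measurable M"
    and indep: "prob_space.indep_vars M (\<lambda>_. borel) (\<lambda>(m, s). chat m s) ({1..} \<times> {1..T - 1})"
    and ident: "\<And>m s. m \<ge> 1 \<Longrightarrow> 1 \<le> s \<Longrightarrow> s \<le> T - 1 \<Longrightarrow>
                  distr M borel (chat m s) = distr M borel (chat 1 1)"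
    and sq_int: "\<And>m s. m \<ge> 1 \<Longrightarrow> 1 \<le> s \<Longrightarrow> s \<le> T - 1 \<Longrightarrow>
                  integrable M (\<lambda>x. (chat m s x)\<^sup>2)"
    and mean: "\<And>m s. m \<ge> 1 \<Longrightarrow> 1 \<le> s \<Longrightarrow> s \<le> T - 1 \<Longrightarrow>
                  prob_space.expectation M (chat m s) = c"
    and var: "\<And>m s. m \<ge> 1 \<Longrightarrow> 1 \<le> s \<Longrightarrow> s \<le> T - 1 \<Longrightarrow>
                  prob_space.variance M (chat m s) = sigma\<^sup>2"
    and "n \<ge> 1"
    and "1 \<le> t" and "t \<le> T - 1"
    and "1 \<le> t'" and "t' \<le> T - 1"
  shows "prob_space.expectation M (vbar alpha gamma T chat n t) = delta alpha gamma T n t * c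
         \<and> covariance M (vbar alpha gamma T chat n t) (vbar alpha gamma T chat n t')
             = lam alpha gamma T n t t' * sigma\<^sup>2"
proof -
  interpret prob_space M by fact
  interpret value_iteration_samples M chat T c sigma
    by unfold_locales (use rv indep sq_int mean var in \<open>auto simp: square_integrable_def\<close>)
  show ?thesis
    using expectation_vbar cov_vbar covariance_eq_cov square_integrable_vbar by simp
qed

end
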